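(* If $\pi\in\mathfrak{S}_m$ is a non-overlapping permutation, then $\pi$ and its reversal $\pi^R=\pi_m\pi_{m-1}\cdots\pi_1$ are super-strongly c-Wilf equivalent.
   Context: The standardization $\operatorname{st}(w)$ of a word of distinct integers replaces its smallest entry by 1, the next smallest by 2, etc. For $\pi\in\mathfrak{S}_m$ and $\sigma\in\mathfrak{S}_n$, $\operatorname{Em}(\pi,\sigma)=\{i\in[n-m+1]:\operatorname{st}(\sigma_i\cdots\sigma_{i+m-1})=\pi\}$. For a set $S$ of positive integers, $a^\pi_{n,S}$ is the number of $\sigma\in\mathfrak{S}_n$ with $\operatorname{Em}(\pi,\sigma)=S$; $\pi,\tau$ are super-strongly c-Wilf equivalent if $a^\pi_{n,S}=a^\tau_{n,S}$ for all $n,S$. The overlap set is $\mathcal{O}_\pi=\{i\in[m-1]:\operatorname{st}(\pi_{i+1}\cdots\pi_m)=\operatorname{st}(\pi_1\cdots\pi_{m-i})\}$; $\pi$ is non-overlapping if $\mathcal{O}_\pi=\{m-1\}$. *)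

theory Defs
  imports Main
begin

definition is_perm :: "nat \<Rightarrow> nat list \<Rightarrow> bool" where
  "is_perm n w \<longleftrightarrow> length w = n \<and> distinct w \<and> set w = {1..n}"

definition perms :: "nat \<Rightarrow> nat list set" where
  "perms n = {w. is_perm n w}"

definition st :: "nat list \<Rightarrow> nat list" where
  "st w = map (\<lambda>x. card {y \<in> set w. y \<le> x}) w"

text \<open>Em(pi, sigma), positions 1-indexed: i in [n-m+1].\<close>
definition Em :: "nat list \<Rightarrow> nat list \<Rightarrow> nat set" where
  "Em p s = {i. 1 \<le> i \<and> i + length p \<le> length s + 1 \<and>
                st (take (length p) (drop (i - 1) s)) = p}"

definition a_count :: "nat list \<Rightarrow> nat \<Rightarrow> nat set \<Rightarrow> nat" where
  "a_count p n S = card {s \<in> perms n. Em p s = S}"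

definition super_strongly_cwilf_equiv :: "nat list \<Rightarrow> nat list \<Rightarrow> bool" where
  "super_strongly_cwilf_equiv p t \<longleftrightarrow>
     (\<forall>n S. (\<forall>i\<in>S. 0 < i) \<longrightarrow> a_count p n S = a_count t n S)"

definition overlap_set :: "nat list \<Rightarrow> nat set" where
  "overlap_set p = {i. 1 \<le> i \<and> i \<le> length p - 1 \<and>
                       st (drop i p) = st (take (length p - i) p)}"

definition non_overlapping :: "nat list \<Rightarrow> bool" where
  "non_overlapping p \<longleftrightarrow> overlap_set p = {length p - 1}"

end

theory Submission
  imports Defs "HOL-Combinatorics.Permutations"
begin

text \<open>Let \<open>b(T)\<close> count the permutations of \<open>[n]\<close> having an occurrence of the pattern at
  every position of \<open>T\<close>. Then \<open>b(T)\<close> is the sum of \<open>a(n, S)\<close> over all \<open>S \<supseteq> T\<close>, so the numbers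
  \<open>b(T)\<close> determine the \<open>a(n, S)\<close>, and it suffices to match them for \<open>\<pi>\<close> and \<open>\<pi>\<^sup>R\<close>.
  Since \<open>\<pi>\<close> is non-overlapping, two occurrences start at least \<open>m - 1\<close> positions apart, so \<open>T\<close>
  splits into maximal chains \<open>a, a + (m-1), \<dots>, a + k(m-1)\<close> of occurrences sharing one entry
  with the next, and distinct chains cover disjoint segments. Reversing the segment covered
  by one chain turns each occurrence of \<open>\<pi>\<close> along the chain into one of \<open>\<pi>\<^sup>R\<close> and fixes
  every other window of \<open>T\<close>; doing this chain by chain gives a bijection.\<close>

lemma st_rev: "st (rev w) = rev (st w)"
  by (simp add: st_def rev_map)

lemma st_map_strict_mono_on:
  assumes "strict_mono_on (set w) h"
  shows "st (map h w) = st w"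
proof -
  have inj: "inj_on h (set w)"
    using assms strict_mono_on_imp_inj_on by blast
  have "card {y \<in> set (map h w). y \<le> h x} = card {y \<in> set w. y \<le> x}" if "x \<in> set w" for x
  proof -
    have "{y \<in> set (map h w). y \<le> h x} = h ` {y \<in> set w. y \<le> x}"
      using strict_mono_on_less_eq[OF assms _ that] by auto
    also have "card \<dots> = card {y \<in> set w. y \<le> x}"
      by (rule card_image) (rule inj_on_subset[OF inj], auto)
    finally show ?thesis .
  qed
  then show ?thesis
    by (simp add: st_def)
qed

lemma strict_mono_on_rank:
  fixes w :: "'a::linorder list"
  shows "strict_mono_on (set w) (\<lambda>x. card {y \<in> set w. y \<le> x})"
proof (rule strict_mono_onI)
  fix r s
  assume "r < s" "s \<in> set w"
  then show "card {y \<in> set w. y \<le> r} < card {y \<in> set w. y \<le> s}"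
  proof (intro psubset_card_mono)
    show "{y \<in> set w. y \<le> r} \<subset> {y \<in> set w. y \<le> s}"
      using \<open>r < s\<close> \<open>s \<in> set w\<close> by (auto simp: less_le_not_le)
  qed simp
qed

lemma st_map_rank:
  assumes "set u \<subseteq> set w"
  shows "st (map (\<lambda>x. card {y \<in> set w. y \<le> x}) u) = st u"
  by (rule st_map_strict_mono_on, rule monotone_on_subset[OF strict_mono_on_rank assms])

lemma st_drop_st: "st (drop d (st w)) = st (drop d w)"
  by (simp add: st_def[of w] drop_map st_map_rank set_drop_subset)

lemma st_take_st: "st (take d (st w)) = st (take d w)"
  by (simp add: st_def[of w] take_map st_map_rank set_take_subset)

definition window :: "'a list \<Rightarrow> nat \<Rightarrow> nat \<Rightarrow> 'a list" where
  "window s m j = take m (drop (j - 1) s)"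

lemma Em_iff_window:
  "j \<in> Em q s \<longleftrightarrow> 1 \<le> j \<and> j + length q \<le> length s + 1 \<and> st (window s (length q) j) = q"
  by (auto simp: Em_def window_def)

lemma length_window: "j - 1 + m \<le> length s \<Longrightarrow> length (window s m j) = m"
  by (simp add: window_def)

lemma nth_window: "t < m \<Longrightarrow> j - 1 + m \<le> length s \<Longrightarrow> window s m j ! t = s ! (j - 1 + t)"
  by (simp add: window_def)

lemma Em_overlap:
  assumes "i \<in> Em q s" and "j \<in> Em q s" and "i < j" and "j - i < length q"
  shows "j - i \<in> overlap_set q"
proof -
  define d where "d = j - i"
  define u where "u = window s (length q) i"
  define v where "v = window s (length q) j"
  have "1 \<le> i" "st u = q" "st v = q"
    using assms(1,2) by (auto simp: Em_iff_window u_def v_def)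
  have "drop d u = take (length q - d) v"
    using \<open>1 \<le> i\<close> \<open>i < j\<close> by (simp add: window_def u_def v_def d_def drop_take add.commute)
  then have "st (drop d q) = st (take (length q - d) q)"
    using st_drop_st[of d u] st_take_st[of "length q - d" v] \<open>st u = q\<close> \<open>st v = q\<close> by simp
  then show ?thesis
    using assms(3,4) by (auto simp: overlap_set_def d_def)
qed

lemma non_overlapping_Em_distance:
  assumes "non_overlapping q" and "i \<in> Em q s" and "j \<in> Em q s" and "i < j"
  shows "length q - 1 \<le> j - i"
proof (rule ccontr)
  assume "\<not> length q - 1 \<le> j - i"
  then have "j - i \<in> overlap_set q"
    using Em_overlap[OF assms(2-4)] by simp
  then show False
    using assms(1) \<open>\<not> length q - 1 \<le> j - i\<close> by (simp add: non_overlapping_def)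
qed

lemma overlap_set_rev: "overlap_set (rev q) = overlap_set q"
  by (auto simp: overlap_set_def drop_rev take_rev st_rev)

lemma non_overlapping_rev: "non_overlapping q \<Longrightarrow> non_overlapping (rev q)"
  by (simp add: non_overlapping_def overlap_set_rev)

lemma non_overlapping_length: "non_overlapping q \<Longrightarrow> 2 \<le> length q"
  by (auto simp: non_overlapping_def overlap_set_def)

definition reflect :: "nat \<Rightarrow> nat \<Rightarrow> nat \<Rightarrow> nat" where
  "reflect lo hi k = (if lo \<le> k \<and> k \<le> hi then lo + hi - k else k)"

lemma reflect_reflect [simp]: "reflect lo hi (reflect lo hi k) = k"
  unfolding reflect_def by auto

lemma reflect_permutes: "reflect lo hi permutes {lo..hi}"
proof (rule bij_imp_permutes)
  show "bij_betw (reflect lo hi) {lo..hi} {lo..hi}"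
    by (rule bij_betw_byWitness[where f' = "reflect lo hi"]) (auto simp: reflect_def split: if_splits)
qed (auto simp: reflect_def)

lemma reflect_permutes_indices:
  "hi < length s \<Longrightarrow> reflect lo hi permutes {..<length s}"
  by (rule permutes_subset[OF reflect_permutes]) auto

lemma permute_list_reflect_involution:
  assumes "hi < length s"
  shows "permute_list (reflect lo hi) (permute_list (reflect lo hi) s) = s"
proof -
  have "reflect lo hi \<circ> reflect lo hi = id"
    by auto
  then show ?thesis
    using permute_list_compose[where f = "reflect lo hi", OF reflect_permutes_indices[OF assms, of lo]]
    by simp
qed

lemma is_perm_permute_list:
  assumes "f permutes {..<n}" and "is_perm n s"
  shows "is_perm n (permute_list f s)"
  using assms by (simp add: is_perm_def)

lemma window_reflect_inside:
  assumes "lo < j" and "lo < j'" and "j + j' + m = lo + hi + 3" and "hi < length s"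
  shows "window (permute_list (reflect lo hi) s) m j = rev (window s m j')"
proof (rule nth_equalityI)
  have "j - 1 + m \<le> length s" "j' - 1 + m \<le> length s"
    using assms by linarith+
  then show "length (window (permute_list (reflect lo hi) s) m j) = length (rev (window s m j'))"
    by (simp add: length_window)
  fix t
  assume "t < length (window (permute_list (reflect lo hi) s) m j)"
  then have "t < m"
    using \<open>j - 1 + m \<le> length s\<close> by (simp add: length_window)
  moreover have "reflect lo hi (j - 1 + t) = j' - 1 + (m - 1 - t)"
    using assms \<open>t < m\<close> by (auto simp: reflect_def)
  ultimately show "window (permute_list (reflect lo hi) s) m j ! t = rev (window s m j') ! t"
    using assms by (simp add: nth_window rev_nth length_window permute_list_nth reflect_permutes_indices)
qed

lemma window_reflect_outside:
  assumes "1 \<le> j" and "j - 1 + m \<le> length s" and "j + m \<le> lo + 1 \<or> hi + 1 < j"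
    and "hi < length s"
  shows "window (permute_list (reflect lo hi) s) m j = window s m j"
proof (rule nth_equalityI)
  fix t
  assume "t < length (window (permute_list (reflect lo hi) s) m j)"
  then have "t < m"
    using assms(2) by (simp add: length_window)
  moreover have "reflect lo hi (j - 1 + t) = j - 1 + t"
    using assms \<open>t < m\<close> by (auto simp: reflect_def)
  ultimately show "window (permute_list (reflect lo hi) s) m j ! t = window s m j ! t"
    using assms by (simp add: nth_window permute_list_nth reflect_permutes_indices)
qed (use assms(2) in \<open>simp add: length_window\<close>)

definition arith_prog :: "nat \<Rightarrow> nat \<Rightarrow> nat \<Rightarrow> nat set" where
  "arith_prog a d k = (\<lambda>r. a + r * d) ` {..k}"

lemma obtain_arith_prog_down_maximal:
  fixes Q :: "nat set"
  assumes "0 < L" and "i \<in> Q"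
  obtains a d where "a + d * L = i" and "\<forall>r\<le>d. a + r * L \<in> Q" and "\<forall>j\<in>Q. j + L \<noteq> a"
proof -
  define P where "P d \<longleftrightarrow> d * L \<le> i \<and> (\<forall>r\<le>d. i - r * L \<in> Q)" for d
  have "P 0"
    using assms by (simp add: P_def)
  have bound: "d \<le> i" if "P d" for d
  proof -
    have "d \<le> d * L"
      using assms(1) by simp
    moreover have "d * L \<le> i"
      using that by (simp add: P_def)
    ultimately show ?thesis
      by linarith
  qed
  have "\<exists>d. P d \<and> (\<forall>d'. P d' \<longrightarrow> d' \<le> d)"
    by (rule Nat.ex_has_greatest_nat[where P = P, OF \<open>P 0\<close>]) (use bound in blast)
  then obtain d where "P d" and d_max: "\<And>d'. P d' \<Longrightarrow> d' \<le> d"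
    by blast
  show thesis
  proof
    show "i - d * L + d * L = i"
      using \<open>P d\<close> by (simp add: P_def)
    show "\<forall>r\<le>d. i - d * L + r * L \<in> Q"
    proof (intro allI impI)
      fix r
      assume "r \<le> d"
      then have "i - d * L + r * L = i - (d - r) * L"
        using \<open>P d\<close> by (simp add: P_def diff_mult_distrib)
      then show "i - d * L + r * L \<in> Q"
        using \<open>P d\<close> by (simp add: P_def)
    qed
    show "\<forall>j\<in>Q. j + L \<noteq> i - d * L"
    proof (intro ballI notI)
      fix j
      assume "j \<in> Q" and "j + L = i - d * L"
      moreover have "d * L \<le> i"
        using \<open>P d\<close> by (simp add: P_def)
      ultimately have "Suc d * L \<le> i" and "i - Suc d * L = j"
        by simp_all
      moreover have "\<forall>r\<le>Suc d. i - r * L \<in> Q"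
        using \<open>P d\<close> \<open>j \<in> Q\<close> \<open>i - Suc d * L = j\<close> by (auto simp: P_def le_Suc_eq)
      ultimately have "P (Suc d)"
        by (simp add: P_def)
      then show False
        using d_max by fastforce
    qed
  qed
qed

lemma obtain_arith_prog_up_maximal:
  fixes Q :: "nat set"
  assumes "finite Q" and "0 < L" and "a \<in> Q"
  obtains k where "\<forall>r\<le>k. a + r * L \<in> Q" and "a + Suc k * L \<notin> Q"
proof -
  define P where "P k \<longleftrightarrow> (\<forall>r\<le>k. a + r * L \<in> Q)" for k
  have "P 0"
    using assms by (simp add: P_def)
  have bound: "k \<le> Max Q" if "P k" for k
  proof -
    have "a + k * L \<in> Q"
      using that by (simp add: P_def)
    then have "a + k * L \<le> Max Q"
      by (rule Max_ge[OF assms(1)])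
    moreover have "k \<le> k * L"
      using assms(2) by simp
    ultimately show ?thesis
      by linarith
  qed
  have "\<exists>k. P k \<and> (\<forall>k'. P k' \<longrightarrow> k' \<le> k)"
    by (rule Nat.ex_has_greatest_nat[where P = P, OF \<open>P 0\<close>]) (use bound in blast)
  then obtain k where "P k" and k_max: "\<And>k'. P k' \<Longrightarrow> k' \<le> k"
    by blast
  have "a + Suc k * L \<notin> Q"
  proof
    assume "a + Suc k * L \<in> Q"
    then have "P (Suc k)"
      using \<open>P k\<close> unfolding P_def by (metis le_SucE)
    then show False
      using k_max by fastforce
  qed
  then show thesis
    using that \<open>P k\<close> unfolding P_def by blast
qed

lemma obtain_maximal_arith_prog:
  fixes Q :: "nat set"
  assumes "finite Q" and "0 < L" and "i \<in> Q"
  obtains a k where "i \<in> arith_prog a L k" and "arith_prog a L k \<subseteq> Q"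
    and "\<forall>j\<in>Q. j + L \<noteq> a" and "a + Suc k * L \<notin> Q"
proof -
  obtain a d where i: "a + d * L = i" and down: "\<forall>r\<le>d. a + r * L \<in> Q"
    and bottom: "\<forall>j\<in>Q. j + L \<noteq> a"
    using obtain_arith_prog_down_maximal[OF assms(2,3)] .
  have "a \<in> Q"
    using down by (metis le0 mult_0 add_0_right)
  then obtain k where up: "\<forall>r\<le>k. a + r * L \<in> Q" and top: "a + Suc k * L \<notin> Q"
    using obtain_arith_prog_up_maximal[OF assms(1,2)] by blast
  have "d \<le> k"
  proof (rule ccontr)
    assume "\<not> d \<le> k"
    then have "a + Suc k * L \<in> Q"
      using down[rule_format, of "Suc k"] by simp
    then show False
      using top by contradiction
  qed
  then show thesis
    using that[of a k] i up bottom top by (auto simp: arith_prog_def)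
qed

lemma arith_prog_neighbour:
  assumes "arith_prog a L k \<subseteq> Q" and "\<forall>j\<in>Q. j + L \<noteq> a" and "a + Suc k * L \<notin> Q"
    and "x \<in> arith_prog a L k" and "y \<in> Q" and "y = x + L \<or> x = y + L"
  shows "y \<in> arith_prog a L k"
proof -
  obtain r where "r \<le> k" and x: "x = a + r * L"
    using assms(4) by (auto simp: arith_prog_def)
  show ?thesis
  proof (cases "y = x + L")
    case True
    then have "y = a + Suc r * L"
      using x by simp
    then have "r \<noteq> k"
      using assms(3,5) by auto
    then show ?thesis
      using \<open>r \<le> k\<close> \<open>y = a + Suc r * L\<close> unfolding arith_prog_def
      by (intro image_eqI[of _ _ "Suc r"]) auto
  next
    case False
    then have "y + L = a + r * L"
      using assms(6) x by simp
    then obtain r' where "r = Suc r'" and "y = a + r' * L"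
      using assms(2,5) by (cases r) auto
    then show ?thesis
      using \<open>r \<le> k\<close> by (auto simp: arith_prog_def)
  qed
qed

lemma closed_union_maximal_arith_prog:
  fixes R T :: "nat set"
  assumes closed: "\<And>i j. i \<in> R \<Longrightarrow> j \<in> T \<Longrightarrow> j = i + L \<or> i = j + L \<Longrightarrow> j \<in> R"
    and prog: "arith_prog a L k \<subseteq> T - R" and bottom: "\<forall>j\<in>T - R. j + L \<noteq> a"
    and top: "a + Suc k * L \<notin> T - R"
  shows "\<forall>j\<in>T. j + L \<noteq> a" and "a + Suc k * L \<notin> T"
    and "\<And>i j. i \<in> R \<union> arith_prog a L k \<Longrightarrow> j \<in> T \<Longrightarrow> j = i + L \<or> i = j + L
           \<Longrightarrow> j \<in> R \<union> arith_prog a L k"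
proof -
  have "a \<in> arith_prog a L k" and "a + k * L \<in> arith_prog a L k"
    by (auto simp: arith_prog_def intro: image_eqI[of _ _ 0])
  then have "a \<in> T - R" and "a + k * L \<in> T - R"
    using prog by blast+
  show "\<forall>j\<in>T. j + L \<noteq> a"
  proof (intro ballI notI)
    fix j
    assume "j \<in> T" and "j + L = a"
    then have "j \<in> R"
      using bottom by blast
    then show False
      using closed[of j a] \<open>j + L = a\<close> \<open>a \<in> T - R\<close> by blast
  qed
  show "a + Suc k * L \<notin> T"
  proof
    assume "a + Suc k * L \<in> T"
    then have "a + Suc k * L \<in> R"
      using top by blast
    then show False
      using closed[of "a + Suc k * L" "a + k * L"] \<open>a + k * L \<in> T - R\<close> by auto
  qed
  fix i j
  assume "i \<in> R \<union> arith_prog a L k" and "j \<in> T" and adjacent: "j = i + L \<or> i = j + L"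
  show "j \<in> R \<union> arith_prog a L k"
  proof (cases "i \<in> R \<or> j \<in> R")
    case True
    then show ?thesis
      using closed[of i j] closed[of j i] adjacent \<open>j \<in> T\<close> \<open>i \<in> R \<union> arith_prog a L k\<close> prog
      by auto
  next
    case False
    then show ?thesis
      using arith_prog_neighbour[OF prog bottom top _ _ adjacent] \<open>i \<in> R \<union> arith_prog a L k\<close> \<open>j \<in> T\<close>
      by blast
  qed
qed

lemma window_reflect_arith_prog:
  assumes "1 \<le> a" and "r \<le> k" and "a - 1 + Suc k * L < length s"
  shows "window (permute_list (reflect (a - 1) (a - 1 + Suc k * L)) s) (Suc L) (a + r * L)
       = rev (window s (Suc L) (a + (k - r) * L))"
proof (rule window_reflect_inside)
  have "r * L + (k - r) * L = k * L"
    using assms(2) by (simp add: add_mult_distrib[symmetric])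
  then show "a + r * L + (a + (k - r) * L) + Suc L = a - 1 + (a - 1 + Suc k * L) + 3"
    using assms(1) by simp
qed (use assms in auto)

definition perms_occ :: "nat \<Rightarrow> nat set \<Rightarrow> nat set \<Rightarrow> nat list \<Rightarrow> nat list set" where
  "perms_occ n T R p = {s \<in> perms n. \<forall>j\<in>T. j \<in> Em (if j \<in> R then rev p else p) s}"

lemma length_perms: "s \<in> perms n \<Longrightarrow> length s = n"
  by (simp add: perms_def is_perm_def)

locale spaced_positions =
  fixes n L :: nat and p :: "nat list" and T :: "nat set"
  assumes length_p: "length p = Suc L" and L_pos: "0 < L"
    and spaced: "\<And>i j. i \<in> T \<Longrightarrow> j \<in> T \<Longrightarrow> i < j \<Longrightarrow> L \<le> j - i"
    and in_range: "\<And>j. j \<in> T \<Longrightarrow> 1 \<le> j \<and> j + L \<le> n"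
begin

lemma finite_T: "finite T"
  by (rule finite_subset[of _ "{1..n}"]) (auto dest: in_range)

lemma Em_iff_window_at:
  assumes "j \<in> T" and "length s = n" and "length q = Suc L"
  shows "j \<in> Em q s \<longleftrightarrow> st (window s (Suc L) j) = q"
  using assms in_range[OF assms(1)] by (auto simp: Em_iff_window)

lemma outside_arith_prog:
  assumes prog: "arith_prog a L k \<subseteq> T" and bottom: "\<forall>j\<in>T. j + L \<noteq> a"
    and top: "a + Suc k * L \<notin> T" and "j \<in> T" and "j \<notin> arith_prog a L k"
  shows "j + L < a \<or> a + Suc k * L < j"
proof (cases "j < a")
  case True
  have "a \<in> T"
    using prog by (force simp: arith_prog_def)
  then have "L \<le> a - j"
    using spaced[OF \<open>j \<in> T\<close> _ True] by blast
  moreover have "j + L \<noteq> a"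
    using bottom \<open>j \<in> T\<close> by blast
  ultimately show ?thesis
    using True by linarith
next
  case False
  have step: "a + Suc r * L \<le> j" if "r \<le> k" and "a + r * L \<le> j" for r
  proof -
    have "a + r * L \<in> arith_prog a L k"
      using that(1) by (auto simp: arith_prog_def)
    moreover have "a + r * L \<noteq> j"
      using calculation assms(5) by blast
    ultimately have "a + r * L \<in> T" and "a + r * L < j"
      using prog that(2) by auto
    then show ?thesis
      using spaced[OF _ \<open>j \<in> T\<close>] by fastforce
  qed
  have "a + Suc r * L \<le> j" if "r \<le> k" for r
    using that
  proof (induction r)
    case 0
    then show ?case
      using step[of 0] False by simp
  next
    case (Suc r)
    then show ?case
      using step[of "Suc r"] by simp
  qed
  then have "a + Suc k * L \<le> j"
    by simp
  moreover have "a + Suc k * L \<noteq> j"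
    using top \<open>j \<in> T\<close> by blast
  ultimately show ?thesis
    by simp
qed

text \<open>Reversing the segment of positions covered by a maximal progression of occurrences
  exchanges occurrences of \<open>p\<close> and \<open>rev p\<close> along it and leaves all other windows of \<open>T\<close> alone.\<close>

lemma reflect_arith_prog_perms_occ:
  assumes prog: "arith_prog a L k \<subseteq> T" and bottom: "\<forall>j\<in>T. j + L \<noteq> a"
    and top: "a + Suc k * L \<notin> T"
    and uniform: "arith_prog a L k \<subseteq> R \<or> arith_prog a L k \<inter> R = {}"
    and R': "\<And>j. j \<in> T \<Longrightarrow> j \<in> R' \<longleftrightarrow> (j \<in> R \<longleftrightarrow> j \<notin> arith_prog a L k)"
    and s: "s \<in> perms_occ n T R p"
  shows "permute_list (reflect (a - 1) (a - 1 + Suc k * L)) s \<in> perms_occ n T R' p"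
proof -
  define C where "C = arith_prog a L k"
  define s' where "s' = permute_list (reflect (a - 1) (a - 1 + Suc k * L)) s"
  define pat :: "nat set \<Rightarrow> nat \<Rightarrow> nat list" where "pat R j = (if j \<in> R then rev p else p)" for R j
  have len: "length s = n" and occ: "\<And>j. j \<in> T \<Longrightarrow> st (window s (Suc L) j) = pat R j"
    using s Em_iff_window_at length_p by (auto simp: perms_occ_def pat_def length_perms)
  have "a \<in> T" and "a + k * L \<in> T"
    using prog by (auto simp: arith_prog_def intro: image_eqI[of _ _ 0])
  then have "1 \<le> a" and hi: "a - 1 + Suc k * L < length s"
    using in_range[of a] in_range[of "a + k * L"] len by auto
  have "reflect (a - 1) (a - 1 + Suc k * L) permutes {..<n}"
    using reflect_permutes_indices[OF hi] len by simp
  then have perm: "s' \<in> perms n"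
    using s is_perm_permute_list by (simp add: s'_def perms_occ_def perms_def)
  have windows: "st (window s' (Suc L) j) = pat R' j" if "j \<in> T" for j
  proof (cases "j \<in> C")
    case True
    then obtain r where "r \<le> k" and j: "j = a + r * L"
      by (auto simp: C_def arith_prog_def)
    have "a + (k - r) * L \<in> C"
      by (auto simp: C_def arith_prog_def)
    moreover have "pat R (a + (k - r) * L) = pat R j"
      using uniform True calculation by (auto simp: pat_def C_def)
    ultimately have "st (window s (Suc L) (a + (k - r) * L)) = pat R j"
      using occ prog by (auto simp: C_def)
    then show ?thesis
      using window_reflect_arith_prog[OF \<open>1 \<le> a\<close> \<open>r \<le> k\<close> hi] R'[OF that] True uniform
      by (auto simp: s'_def j st_rev pat_def C_def)
  next
    case False
    then have "j + L < a \<or> a + Suc k * L < j"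
      using outside_arith_prog[OF prog bottom top that] by (simp add: C_def)
    then have "window s' (Suc L) j = window s (Suc L) j"
      unfolding s'_def using in_range[OF that] len hi \<open>1 \<le> a\<close>
      by (intro window_reflect_outside) auto
    then show ?thesis
      using occ[OF that] R'[OF that] False by (simp add: pat_def C_def)
  qed
  have "j \<in> Em (pat R' j) s'" if "j \<in> T" for j
    using Em_iff_window_at[OF that length_perms[OF perm]] windows[OF that] length_p
    by (simp add: pat_def)
  then show ?thesis
    using perm by (simp add: perms_occ_def s'_def pat_def)
qed

lemma card_perms_occ_reflect:
  assumes prog: "arith_prog a L k \<subseteq> T - R" and bottom: "\<forall>j\<in>T. j + L \<noteq> a"
    and top: "a + Suc k * L \<notin> T"
  shows "card (perms_occ n T R p) = card (perms_occ n T (R \<union> arith_prog a L k) p)"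
proof -
  define f :: "nat list \<Rightarrow> nat list" where "f = permute_list (reflect (a - 1) (a - 1 + Suc k * L))"
  have prog': "arith_prog a L k \<subseteq> T"
    using prog by blast
  have "a \<in> T" and "a + k * L \<in> T"
    using prog' by (auto simp: arith_prog_def intro: image_eqI[of _ _ 0])
  then have hi: "a - 1 + Suc k * L < n"
    using in_range[of a] in_range[of "a + k * L"] by auto
  have "f ` perms_occ n T R p \<subseteq> perms_occ n T (R \<union> arith_prog a L k) p"
    unfolding f_def
    by (intro image_subsetI reflect_arith_prog_perms_occ[OF prog' bottom top]) (use prog in auto)
  moreover have "f ` perms_occ n T (R \<union> arith_prog a L k) p \<subseteq> perms_occ n T R p"
    unfolding f_def
    by (intro image_subsetI reflect_arith_prog_perms_occ[OF prog' bottom top]) (use prog in auto)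
  moreover have "f (f s) = s" if "s \<in> perms_occ n T R'' p" for s R''
  proof -
    have "length s = n"
      using that by (simp add: perms_occ_def length_perms)
    then show ?thesis
      using permute_list_reflect_involution[where s = s] hi by (simp add: f_def)
  qed
  ultimately have "bij_betw f (perms_occ n T R p) (perms_occ n T (R \<union> arith_prog a L k) p)"
    by (intro bij_betw_byWitness[where f' = f]) auto
  then show ?thesis
    by (rule bij_betw_same_card)
qed

text \<open>A set \<open>R\<close> closed under \<open>L\<close>-neighbours is a union of maximal chains of \<open>T\<close>; these are
  flipped one at a time.\<close>

lemma card_perms_occ_closed:
  assumes "R \<subseteq> T" and "\<And>i j. i \<in> R \<Longrightarrow> j \<in> T \<Longrightarrow> j = i + L \<or> i = j + L \<Longrightarrow> j \<in> R"
  shows "card (perms_occ n T R p) = card (perms_occ n T T p)"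
  using assms
proof (induction "card (T - R)" arbitrary: R rule: less_induct)
  case less
  show ?case
  proof (cases "R = T")
    case False
    then obtain i where "i \<in> T - R"
      using less.prems(1) by blast
    then obtain a k where i: "i \<in> arith_prog a L k" and prog: "arith_prog a L k \<subseteq> T - R"
      and bottom: "\<forall>j\<in>T - R. j + L \<noteq> a" and top: "a + Suc k * L \<notin> T - R"
      using obtain_maximal_arith_prog[OF _ L_pos] finite_T by (metis finite_Diff)
    define C where "C = arith_prog a L k"
    note extend = closed_union_maximal_arith_prog[OF less.prems(2) prog bottom top, folded C_def]
    have "T - (R \<union> C) \<subset> T - R"
      using i prog by (auto simp: C_def)
    then have "card (T - (R \<union> C)) < card (T - R)"
      using finite_T by (intro psubset_card_mono) auto
    then have "card (perms_occ n T (R \<union> C) p) = card (perms_occ n T T p)"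
      by (rule less.hyps) (use less.prems(1) prog extend(3) in \<open>auto simp: C_def\<close>)
    then show ?thesis
      using card_perms_occ_reflect[OF prog extend(1,2)] by (simp add: C_def)
  qed simp
qed

end

lemma spaced_positions_if_Em:
  assumes "non_overlapping q" and "s \<in> perms n" and "T \<subseteq> Em q s" and "length p = length q"
  shows "spaced_positions n (length q - 1) p T"
proof
  have "2 \<le> length q"
    using assms(1) by (rule non_overlapping_length)
  then show "length p = Suc (length q - 1)" and "0 < length q - 1"
    using assms(4) by simp_all
  show "length q - 1 \<le> j - i" if "i \<in> T" and "j \<in> T" and "i < j" for i j
    using non_overlapping_Em_distance[OF assms(1)] assms(3) that by blast
  show "1 \<le> j \<and> j + (length q - 1) \<le> n" if "j \<in> T" for j
  proof -
    have "j \<in> Em q s"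
      using that assms(3) by blast
    then have "1 \<le> j" and "j + length q \<le> n + 1"
      using length_perms[OF assms(2)] by (simp_all add: Em_iff_window)
    then show ?thesis
      using \<open>2 \<le> length q\<close> by simp
  qed
qed

lemma card_superset_Em_rev:
  assumes "non_overlapping p"
  shows "card {s \<in> perms n. T \<subseteq> Em p s} = card {s \<in> perms n. T \<subseteq> Em (rev p) s}"
proof (cases "\<exists>s\<in>perms n. T \<subseteq> Em p s \<or> T \<subseteq> Em (rev p) s")
  case True
  then interpret spaced_positions n "length p - 1" p T
    using spaced_positions_if_Em[OF assms] spaced_positions_if_Em[OF non_overlapping_rev[OF assms]]
    by fastforce
  have "{s \<in> perms n. T \<subseteq> Em p s} = perms_occ n T {} p"
    and "{s \<in> perms n. T \<subseteq> Em (rev p) s} = perms_occ n T T p"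
    by (auto simp: perms_occ_def)
  then show ?thesis
    using card_perms_occ_closed[of "{}"] by simp
next
  case False
  then have "{s \<in> perms n. T \<subseteq> Em q s} = {}" if "q = p \<or> q = rev p" for q
    using that by blast
  then show ?thesis
    by (metis (no_types, lifting))
qed

lemma Em_subset: "s \<in> perms n \<Longrightarrow> Em q s \<subseteq> {1..Suc n}"
  by (auto simp: Em_def length_perms)

lemma finite_perms: "finite (perms n)"
proof (rule finite_subset)
  show "perms n \<subseteq> {w. set w \<subseteq> {1..n} \<and> length w = n}"
    by (auto simp: perms_def is_perm_def)
qed (rule finite_lists_length_eq, simp)

lemma card_superset_Em_eq_sum:
  "card {s \<in> perms n. T \<subseteq> Em q s} = (\<Sum>S | S \<subseteq> {1..Suc n} \<and> T \<subseteq> S. a_count q n S)"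
proof -
  have "card {s \<in> perms n. T \<subseteq> Em q s} = (\<Sum>s | s \<in> perms n \<and> T \<subseteq> Em q s. 1)"
    by simp
  also have "\<dots> = (\<Sum>S | S \<subseteq> {1..Suc n} \<and> T \<subseteq> S.
                    \<Sum>s | s \<in> {s \<in> perms n. T \<subseteq> Em q s} \<and> Em q s = S. 1)"
  proof (rule sum.group[symmetric])
    show "Em q ` {s \<in> perms n. T \<subseteq> Em q s} \<subseteq> {S. S \<subseteq> {1..Suc n} \<and> T \<subseteq> S}"
      using Em_subset by blast
  qed (simp_all add: finite_perms)
  also have "\<dots> = (\<Sum>S | S \<subseteq> {1..Suc n} \<and> T \<subseteq> S. a_count q n S)"
    by (rule sum.cong) (auto simp: a_count_def intro!: arg_cong[where f = card])
  finally show ?thesis .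
qed

lemma eq_if_superset_sums_eq:
  fixes f g :: "'a set \<Rightarrow> 'b::cancel_comm_monoid_add"
  assumes "finite U"
    and sums: "\<And>T. T \<subseteq> U \<Longrightarrow> (\<Sum>S | S \<subseteq> U \<and> T \<subseteq> S. f S) = (\<Sum>S | S \<subseteq> U \<and> T \<subseteq> S. g S)"
    and "T \<subseteq> U"
  shows "f T = g T"
  using assms(3)
proof (induction "card (U - T)" arbitrary: T rule: less_induct)
  case less
  define I where "I = {S. S \<subseteq> U \<and> T \<subset> S}"
  have "finite I"
    using assms(1) by (auto simp: I_def intro: finite_subset[of _ "Pow U"])
  have supersets: "{S. S \<subseteq> U \<and> T \<subseteq> S} = insert T I" and "T \<notin> I"
    using less.prems by (auto simp: I_def)
  have "f S = g S" if "S \<in> I" for S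
  proof (rule less.hyps)
    show "card (U - S) < card (U - T)"
      using that less.prems assms(1) by (intro psubset_card_mono) (auto simp: I_def)
  qed (use that in \<open>simp add: I_def\<close>)
  then have "sum f I = sum g I"
    by (rule sum.cong[OF refl])
  moreover have "f T + sum f I = g T + sum g I"
    using sums[OF less.prems] \<open>finite I\<close> \<open>T \<notin> I\<close> by (simp add: supersets)
  ultimately show ?case
    by simp
qed

theorem corollary5p5:
  fixes p :: "nat list" and m :: nat
  assumes "is_perm m p" and "non_overlapping p"
  shows "super_strongly_cwilf_equiv p (rev p)"
  unfolding super_strongly_cwilf_equiv_def
proof (intro allI impI)
  fix n S
  show "a_count p n S = a_count (rev p) n S"
  proof (cases "S \<subseteq> {1..Suc n}")
    case True
    show ?thesis
    proof (rule eq_if_superset_sums_eq[OF _ _ True])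
      fix T
      show "(\<Sum>S | S \<subseteq> {1..Suc n} \<and> T \<subseteq> S. a_count p n S)
          = (\<Sum>S | S \<subseteq> {1..Suc n} \<and> T \<subseteq> S. a_count (rev p) n S)"
        using card_superset_Em_rev[OF assms(2)] by (simp add: card_superset_Em_eq_sum)
    qed simp
  next
    case False
    then have empty: "{s \<in> perms n. Em q s = S} = {}" for q
      using Em_subset by blast
    show ?thesis
      unfolding a_count_def empty ..
  qed
qed

end
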